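(* Let $K$ be a field, $A$ a subring of $K$, and $Z:=\mathrm{Zar}(K|A)$. Then: (1) The ultrafilter topology on $Z$ is finer than the Zariski topology on $Z$. (2) For any subset $S$ of $K$, the set $B_S:=\{V\in Z\mid V\supseteq S\}$ is closed in the ultrafilter topology. In particular, the basic open sets $B_F$ ($F$ a finite subset of $K$) of the Zariski topology are both open and closed in the ultrafilter topology. (3) Let $Z^{\#}$ denote $Z$ endowed with the $\#$-topology, defined as the coarsest topology on $Z$ for which $B_F$ is both open and closed for every finite subset $F$ of $K$. Then $Z^{\#}$ is a Hausdorff topological space. (4) The $\#$-topology on $Z$ is the coarsest topology having as closed sets the closed sets and the quasi-compact open sets of $Z$ with the Zariski topology; i.e., the family $\{B_F \mid F \text{ a finite subset of } K\}\cup\{\bigcap\{Z\setminus B_G\mid G\in\mathcal G\}\mid \mathcal G \text{ a set of finite subsets of } K\}$ is a subbasis for the closed subsets of $Z^{\#}$. (5) $Z$ with the ultrafilter topology is a Hausdorff compact topological space. (6) The ultrafilter topology, the $\#$-topology and the constructible topology on $Z$ coincide.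
   Context: $\mathrm{Zar}(K|A)$ denotes the set of all valuation rings of $K$ containing $A$. For $S\subseteq K$, $B_S:=\{V\in Z\mid V\supseteq S\}$, and $B_x:=B_{\{x\}}$. The Zariski topology on $Z$ is the topology having as a basis of open sets the sets $B_F$, $F$ ranging over the finite subsets of $K$. A filter on a set $X$ is a nonempty collection of subsets of $X$ not containing $\emptyset$, closed under finite intersections and supersets; an ultrafilter is a maximal filter. For $Y\subseteq Z$ nonempty and $\mathscr U$ an ultrafilter on $Y$, $A_{\mathscr U,Y}:=\{x\in K\mid B_x\cap Y\in\mathscr U\}$ (a valuation domain in $Z$). A subset $Y\subseteq Z$ is stable for ultrafilters if $A_{\mathscr U,Y}\in Y$ for all ultrafilters $\mathscr U$ on $Y$; the ultrafilter topology on $Z$ is the topology whose closed sets are exactly the subsets stable for ultrafilters. For a topological space $\mathcal X$, the constructible topology on $\mathcal X$ is the topology having as a basis the Boolean algebra of subsets of $\mathcal X$ generated (under finite unions, finite intersections and complements) by the quasi-compact open subsets of $\mathcal X$; on $Z$ it is taken with respect to the Zariski topology. *)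

theory Defs
  imports "HOL-Analysis.Analysis"
begin

text \<open>The field K is modelled as the type 'a of class field, i.e. K = UNIV.\<close>

definition is_subring :: "'a::field set \<Rightarrow> bool" where
  "is_subring R \<longleftrightarrow> 0 \<in> R \<and> 1 \<in> R \<and>
     (\<forall>x\<in>R. \<forall>y\<in>R. x + y \<in> R \<and> x * y \<in> R \<and> - x \<in> R)"

definition valuation_ring :: "'a::field set \<Rightarrow> bool" where
  "valuation_ring V \<longleftrightarrow> is_subring V \<and> (\<forall>x. x \<noteq> 0 \<longrightarrow> x \<in> V \<or> inverse x \<in> V)"

definition Zar :: "'a::field set \<Rightarrow> 'a set set" where
  "Zar A = {V. valuation_ring V \<and> A \<subseteq> V}"

definition Bset :: "'a::field set \<Rightarrow> 'a set \<Rightarrow> 'a set set" where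
  "Bset A S = {V \<in> Zar A. S \<subseteq> V}"

definition zariski_top :: "'a::field set \<Rightarrow> 'a set topology" where
  "zariski_top A = topology_generated_by {Bset A F | F. finite F}"

definition filter_on :: "'b set \<Rightarrow> 'b set set \<Rightarrow> bool" where
  "filter_on X \<F> \<longleftrightarrow> \<F> \<noteq> {} \<and> (\<forall>S\<in>\<F>. S \<subseteq> X) \<and> {} \<notin> \<F> \<and>
     (\<forall>S\<in>\<F>. \<forall>T\<in>\<F>. S \<inter> T \<in> \<F>) \<and>
     (\<forall>S\<in>\<F>. \<forall>T. S \<subseteq> T \<and> T \<subseteq> X \<longrightarrow> T \<in> \<F>)"

definition ultrafilter_on :: "'b set \<Rightarrow> 'b set set \<Rightarrow> bool" where
  "ultrafilter_on X \<U> \<longleftrightarrow> filter_on X \<U> \<and> (\<forall>\<G>. filter_on X \<G> \<and> \<U> \<subseteq> \<G> \<longrightarrow> \<G> = \<U>)"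

definition A_ultra :: "'a::field set \<Rightarrow> 'a set set set \<Rightarrow> 'a set set \<Rightarrow> 'a set" where
  "A_ultra A \<U> Y = {x. Bset A {x} \<inter> Y \<in> \<U>}"

definition stable_ultra :: "'a::field set \<Rightarrow> 'a set set \<Rightarrow> bool" where
  "stable_ultra A Y \<longleftrightarrow> Y \<subseteq> Zar A \<and> (\<forall>\<U>. ultrafilter_on Y \<U> \<longrightarrow> A_ultra A \<U> Y \<in> Y)"

text \<open>Ultrafilter topology: closed sets are the subsets of Zar A stable for ultrafilters
  (realised as the topology generated by their complements).\<close>
definition ultra_top :: "'a::field set \<Rightarrow> 'a set topology" where
  "ultra_top A = topology_generated_by {Zar A - Y | Y. stable_ultra A Y}"

definition sharp_top :: "'a::field set \<Rightarrow> 'a set topology" where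
  "sharp_top A = topology_generated_by
     ({Bset A F | F. finite F} \<union> {Zar A - Bset A F | F. finite F})"

text \<open>Constructible topology of a topological space: basis = Boolean algebra generated by
  the quasi-compact open sets; equivalently generated by these sets and their complements.\<close>
definition constructible_top :: "'b topology \<Rightarrow> 'b topology" where
  "constructible_top X = topology_generated_by
     ({U. openin X U \<and> compactin X U} \<union> {topspace X - U | U. openin X U \<and> compactin X U})"

end

theory Submission
  imports Defs
begin

text \<open>
  For an ultrafilter U on a set Y \<subseteq> Zar A, the ring A_U lies in Zar A, and U converges to
  A_U in the #-topology: every subbasic set B_F or Zar A - B_F containing A_U meets Y in a
  member of U. Hence sets stable for ultrafilters are #-compact; as the sets B_{x} separate
  points, the #-topology is Hausdorff, so stable sets are #-closed. Conversely the subbasic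
  #-closed sets B_F and Zar A - B_F are stable, so the ultrafilter topology and the #-topology
  agree, and Zar A = B_{} is compact. A quasi-compact Zariski open set is a finite union of sets
  B_F, hence #-clopen, which identifies the #-topology with the constructible one.
\<close>

section \<open>Filters and ultrafilters\<close>

lemma filter_on_top: "filter_on Y \<U> \<Longrightarrow> Y \<in> \<U>"
  unfolding filter_on_def by blast

lemma filter_on_Int: "filter_on Y \<U> \<Longrightarrow> S \<in> \<U> \<Longrightarrow> T \<in> \<U> \<Longrightarrow> S \<inter> T \<in> \<U>"
  unfolding filter_on_def by blast

lemma filter_on_mono: "filter_on Y \<U> \<Longrightarrow> S \<in> \<U> \<Longrightarrow> S \<subseteq> T \<Longrightarrow> T \<subseteq> Y \<Longrightarrow> T \<in> \<U>"
  unfolding filter_on_def by blast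

lemma filter_on_empty: "filter_on Y \<U> \<Longrightarrow> {} \<notin> \<U>"
  unfolding filter_on_def by blast

lemma filter_on_disjoint: "filter_on Y \<U> \<Longrightarrow> S \<in> \<U> \<Longrightarrow> T \<in> \<U> \<Longrightarrow> S \<inter> T \<noteq> {}"
  unfolding filter_on_def by metis

lemma ultrafilter_on_filter_on: "ultrafilter_on Y \<U> \<Longrightarrow> filter_on Y \<U>"
  unfolding ultrafilter_on_def by blast

lemma ultrafilter_on_Diff:
  assumes u: "ultrafilter_on Y \<U>" and "S \<subseteq> Y" and "S \<notin> \<U>"
  shows "Y - S \<in> \<U>"
proof -
  have f: "filter_on Y \<U>" using u by (rule ultrafilter_on_filter_on)
  define \<G> where "\<G> = {T. T \<subseteq> Y \<and> (\<exists>W\<in>\<U>. W - S \<subseteq> T)}"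
  have nonempty: "W - S \<noteq> {}" if "W \<in> \<U>" for W
    using f that assms(2,3) filter_on_mono by blast
  have "filter_on Y \<G>"
    unfolding filter_on_def
  proof (intro conjI ballI allI impI)
    show "\<G> \<noteq> {}" "{} \<notin> \<G>"
      using filter_on_top[OF f] nonempty unfolding \<G>_def by blast+
    show "T\<^sub>1 \<inter> T\<^sub>2 \<in> \<G>" if T: "T\<^sub>1 \<in> \<G>" "T\<^sub>2 \<in> \<G>" for T\<^sub>1 T\<^sub>2
    proof -
      obtain W\<^sub>1 W\<^sub>2 where "W\<^sub>1 \<in> \<U>" "W\<^sub>2 \<in> \<U>" "W\<^sub>1 - S \<subseteq> T\<^sub>1" "W\<^sub>2 - S \<subseteq> T\<^sub>2"
        using T unfolding \<G>_def by blast
      moreover have "W\<^sub>1 \<inter> W\<^sub>2 \<in> \<U>" using filter_on_Int[OF f] calculation by blast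
      ultimately show ?thesis using T unfolding \<G>_def by blast
    qed
  qed (auto simp: \<G>_def)
  moreover have "\<U> \<subseteq> \<G>"
    using f unfolding \<G>_def filter_on_def by auto
  ultimately have "\<G> = \<U>" using u unfolding ultrafilter_on_def by blast
  moreover have "Y - S \<in> \<G>" using filter_on_top[OF f] unfolding \<G>_def by blast
  ultimately show ?thesis by simp
qed

lemma filter_on_Union_chain:
  assumes "\<C> \<noteq> {}" and filters: "\<And>\<G>. \<G> \<in> \<C> \<Longrightarrow> filter_on Y \<G>"
    and "subset.chain UNIV \<C>"
  shows "filter_on Y (\<Union>\<C>)"
  unfolding filter_on_def
proof (intro conjI ballI allI impI)
  show "\<Union>\<C> \<noteq> {}" using assms(1) filters filter_on_top by blast
  show "{} \<notin> \<Union>\<C>" using filters filter_on_empty by blast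
  show "S \<subseteq> Y" if S: "S \<in> \<Union>\<C>" for S
  proof -
    obtain \<G> where "\<G> \<in> \<C>" "S \<in> \<G>" using S by blast
    with filters show ?thesis unfolding filter_on_def by blast
  qed
  show "T \<in> \<Union>\<C>" if S: "S \<in> \<Union>\<C>" and T: "S \<subseteq> T \<and> T \<subseteq> Y" for S T
  proof -
    obtain \<G> where "\<G> \<in> \<C>" "S \<in> \<G>" using S by blast
    then have "T \<in> \<G>" using filter_on_mono[OF filters] T by blast
    with \<open>\<G> \<in> \<C>\<close> show ?thesis by blast
  qed
  show "S \<inter> T \<in> \<Union>\<C>" if ST: "S \<in> \<Union>\<C>" "T \<in> \<Union>\<C>" for S T
  proof -
    obtain \<G> where "\<G> \<in> \<C>" "S \<in> \<G>" "T \<in> \<G>"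
      using ST assms(3) unfolding subset.chain_def by blast
    then have "S \<inter> T \<in> \<G>" using filter_on_Int[OF filters] by blast
    with \<open>\<G> \<in> \<C>\<close> show ?thesis by blast
  qed
qed

lemma ultrafilter_on_extends:
  assumes "filter_on Y \<F>"
  shows "\<exists>\<U>. ultrafilter_on Y \<U> \<and> \<F> \<subseteq> \<U>"
proof -
  define \<A> where "\<A> = {\<G>. filter_on Y \<G> \<and> \<F> \<subseteq> \<G>}"
  have "\<exists>\<M>\<in>\<A>. \<forall>\<G>\<in>\<A>. \<M> \<subseteq> \<G> \<longrightarrow> \<G> = \<M>"
  proof (rule subset_Zorn_nonempty)
    show "\<A> \<noteq> {}" using assms unfolding \<A>_def by blast
    fix \<C> assume "\<C> \<noteq> {}" and chain: "subset.chain \<A> \<C>"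
    then have "\<C> \<subseteq> \<A>" and "subset.chain UNIV \<C>"
      unfolding subset.chain_def by blast+
    have "filter_on Y (\<Union>\<C>)"
    proof (rule filter_on_Union_chain)
      show "filter_on Y \<G>" if "\<G> \<in> \<C>" for \<G>
        using that \<open>\<C> \<subseteq> \<A>\<close> unfolding \<A>_def by blast
    qed fact+
    moreover have "\<F> \<subseteq> \<Union>\<C>"
      using \<open>\<C> \<noteq> {}\<close> \<open>\<C> \<subseteq> \<A>\<close> unfolding \<A>_def by blast
    ultimately show "\<Union>\<C> \<in> \<A>" unfolding \<A>_def by blast
  qed
  then obtain \<M> where "\<M> \<in> \<A>" and maximal: "\<forall>\<G>\<in>\<A>. \<M> \<subseteq> \<G> \<longrightarrow> \<G> = \<M>"
    by blast
  have "ultrafilter_on Y \<M>"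
    unfolding ultrafilter_on_def
  proof (intro conjI allI impI)
    show "filter_on Y \<M>" using \<open>\<M> \<in> \<A>\<close> unfolding \<A>_def by blast
    show "\<G> = \<M>" if "filter_on Y \<G> \<and> \<M> \<subseteq> \<G>" for \<G>
      using that \<open>\<M> \<in> \<A>\<close> maximal unfolding \<A>_def by blast
  qed
  with \<open>\<M> \<in> \<A>\<close> show ?thesis unfolding \<A>_def by blast
qed

lemma filter_on_complements_of_cover:
  assumes "\<nexists>\<F>. finite \<F> \<and> \<F> \<subseteq> \<O> \<and> Y \<subseteq> \<Union>\<F>"
  shows "filter_on Y {T. T \<subseteq> Y \<and> (\<exists>\<F>. finite \<F> \<and> \<F> \<subseteq> \<O> \<and> Y - \<Union>\<F> \<subseteq> T)}"
  unfolding filter_on_def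
proof (intro conjI ballI allI impI)
  let ?\<FF> = "{T. T \<subseteq> Y \<and> (\<exists>\<F>. finite \<F> \<and> \<F> \<subseteq> \<O> \<and> Y - \<Union>\<F> \<subseteq> T)}"
  have "Y \<in> ?\<FF>" by (auto intro!: exI[of _ "{}"])
  then show "?\<FF> \<noteq> {}" by blast
  show "{} \<notin> ?\<FF>" using assms by auto
  show "S \<inter> T \<in> ?\<FF>" if ST: "S \<in> ?\<FF>" "T \<in> ?\<FF>" for S T
  proof -
    obtain \<F>\<^sub>1 \<F>\<^sub>2 where "finite \<F>\<^sub>1" "\<F>\<^sub>1 \<subseteq> \<O>" "Y - \<Union>\<F>\<^sub>1 \<subseteq> S"
      and "finite \<F>\<^sub>2" "\<F>\<^sub>2 \<subseteq> \<O>" "Y - \<Union>\<F>\<^sub>2 \<subseteq> T"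
      using ST by blast
    then have "finite (\<F>\<^sub>1 \<union> \<F>\<^sub>2) \<and> \<F>\<^sub>1 \<union> \<F>\<^sub>2 \<subseteq> \<O> \<and> Y - \<Union>(\<F>\<^sub>1 \<union> \<F>\<^sub>2) \<subseteq> S \<inter> T"
      by blast
    with ST show ?thesis by blast
  qed
  show "T \<in> ?\<FF>" if S: "S \<in> ?\<FF>" and T: "S \<subseteq> T \<and> T \<subseteq> Y" for S T
  proof -
    obtain \<F> where "finite \<F>" "\<F> \<subseteq> \<O>" "Y - \<Union>\<F> \<subseteq> S"
      using S by blast
    with T show ?thesis by blast
  qed
qed auto

section \<open>Compactness and generated topologies\<close>

lemma compactin_if_ultrafilters_converge:
  assumes Y: "Y \<subseteq> topspace X"
    and lim: "\<And>\<U>. ultrafilter_on Y \<U> \<Longrightarrow> \<exists>y\<in>Y. \<forall>W. openin X W \<and> y \<in> W \<longrightarrow> W \<inter> Y \<in> \<U>"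
  shows "compactin X Y"
  unfolding compactin_def
proof (intro conjI allI impI Y)
  fix \<O> assume cover: "(\<forall>V\<in>\<O>. openin X V) \<and> Y \<subseteq> \<Union>\<O>"
  show "\<exists>\<F>. finite \<F> \<and> \<F> \<subseteq> \<O> \<and> Y \<subseteq> \<Union>\<F>"
  proof (rule ccontr)
    assume "\<nexists>\<F>. finite \<F> \<and> \<F> \<subseteq> \<O> \<and> Y \<subseteq> \<Union>\<F>"
    from ultrafilter_on_extends[OF filter_on_complements_of_cover[OF this]]
    obtain \<U> where u: "ultrafilter_on Y \<U>"
      and sub: "{T. T \<subseteq> Y \<and> (\<exists>\<F>. finite \<F> \<and> \<F> \<subseteq> \<O> \<and> Y - \<Union>\<F> \<subseteq> T)} \<subseteq> \<U>"
      by blast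
    obtain y where "y \<in> Y" and converges: "\<forall>W. openin X W \<and> y \<in> W \<longrightarrow> W \<inter> Y \<in> \<U>"
      using lim[OF u] by blast
    then obtain V where "V \<in> \<O>" "y \<in> V" using cover by blast
    then have "V \<inter> Y \<in> \<U>" using converges cover by blast
    moreover have "Y - V \<in> \<U>"
      using sub by (rule subsetD) (use \<open>V \<in> \<O>\<close> in \<open>auto intro!: exI[of _ "{V}"]\<close>)
    ultimately show False
      using filter_on_disjoint[OF ultrafilter_on_filter_on[OF u]] by blast
  qed
qed

lemma filter_on_neighbourhood_generated_by:
  assumes f: "filter_on Y \<U>" and sub: "\<And>s. s \<in> \<S> \<Longrightarrow> p \<in> s \<Longrightarrow> s \<inter> Y \<in> \<U>"
    and W: "openin (topology_generated_by \<S>) W" and "p \<in> W"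
  shows "W \<inter> Y \<in> \<U>"
proof -
  have "generate_topology_on \<S> W" using W by (simp add: openin_topology_generated_by_iff)
  then show ?thesis using \<open>p \<in> W\<close>
  proof (induction rule: generate_topology_on.induct)
    case Empty
    then show ?case by simp
  next
    case (Basis s)
    then show ?case by (rule sub)
  next
    case (Int a b)
    then have "(a \<inter> Y) \<inter> (b \<inter> Y) \<in> \<U>" by (simp add: filter_on_Int[OF f])
    then show ?case by (simp add: Int_assoc Int_left_commute)
  next
    case (UN K)
    then obtain k where "k \<in> K" "k \<inter> Y \<in> \<U>" by blast
    moreover have "k \<inter> Y \<subseteq> \<Union>K \<inter> Y" using \<open>k \<in> K\<close> by blast
    ultimately show ?case by (metis filter_on_mono[OF f] inf_le2)
  qed
qed

lemma openin_topology_generated_by_coarsest: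
  assumes "\<And>s. s \<in> \<S> \<Longrightarrow> openin X s" and "openin (topology_generated_by \<S>) W"
  shows "openin X W"
proof -
  have "generate_topology_on \<S> W" using assms(2) by (simp add: openin_topology_generated_by_iff)
  then show ?thesis using generate_topology_on_coarsest[of "openin X"] assms(1) by blast
qed

lemma topology_generated_by_eqI:
  assumes X: "X = topology_generated_by \<S>" and Y: "Y = topology_generated_by \<T>"
    and "\<And>s. s \<in> \<S> \<Longrightarrow> openin Y s" and "\<And>t. t \<in> \<T> \<Longrightarrow> openin X t"
  shows "X = Y"
  unfolding topology_eq
proof (intro allI iffI)
  show "openin Y W" if "openin X W" for W
    using that X assms(3) openin_topology_generated_by_coarsest by metis
  show "openin X W" if "openin Y W" for W
    using that Y assms(4) openin_topology_generated_by_coarsest by metis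
qed

section \<open>The valuation ring of an ultrafilter\<close>

lemma Bset_subset_Zar: "Bset A S \<subseteq> Zar A"
  unfolding Bset_def by blast

lemma Bset_empty: "Bset A {} = Zar A"
  unfolding Bset_def by blast

lemma Bset_Un: "Bset A (S \<union> T) = Bset A S \<inter> Bset A T"
  unfolding Bset_def by blast

lemma Bset_Int_mem_ultrafilter:
  assumes Y: "Y \<subseteq> Zar A" and u: "ultrafilter_on Y \<U>"
    and "finite F" and "F \<subseteq> A_ultra A \<U> Y"
  shows "Bset A F \<inter> Y \<in> \<U>"
  using \<open>finite F\<close> \<open>F \<subseteq> A_ultra A \<U> Y\<close>
proof (induction F rule: finite_induct)
  case empty
  have "Bset A {} \<inter> Y = Y" using Y unfolding Bset_empty by blast
  then show ?case using filter_on_top[OF ultrafilter_on_filter_on[OF u]] by simp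
next
  case (insert x F)
  have "Bset A {x} \<inter> Y \<in> \<U>" using insert.prems unfolding A_ultra_def by blast
  moreover have "Bset A F \<inter> Y \<in> \<U>" using insert.prems insert.IH by blast
  ultimately have "(Bset A {x} \<inter> Y) \<inter> (Bset A F \<inter> Y) \<in> \<U>"
    by (rule filter_on_Int[OF ultrafilter_on_filter_on[OF u]])
  moreover have "(Bset A {x} \<inter> Y) \<inter> (Bset A F \<inter> Y) = Bset A (insert x F) \<inter> Y"
    using Bset_Un[of A "{x}" F] by auto
  ultimately show ?case by simp
qed

lemma Diff_Bset_Int_mem_ultrafilter:
  assumes Y: "Y \<subseteq> Zar A" and u: "ultrafilter_on Y \<U>" and "\<not> F \<subseteq> A_ultra A \<U> Y"
  shows "(Zar A - Bset A F) \<inter> Y \<in> \<U>"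
proof -
  obtain x where "x \<in> F" "Bset A {x} \<inter> Y \<notin> \<U>"
    using assms(3) unfolding A_ultra_def by blast
  then have "Y - Bset A {x} \<inter> Y \<in> \<U>" by (blast intro: ultrafilter_on_Diff[OF u])
  moreover have "Y - Bset A {x} \<inter> Y \<subseteq> (Zar A - Bset A F) \<inter> Y"
    using Y \<open>x \<in> F\<close> unfolding Bset_def by blast
  ultimately show ?thesis by (rule filter_on_mono[OF ultrafilter_on_filter_on[OF u]]) blast
qed

lemma A_ultra_closed:
  assumes Y: "Y \<subseteq> Zar A" and u: "ultrafilter_on Y \<U>"
    and "finite F" "F \<subseteq> A_ultra A \<U> Y" and forces: "\<And>V. V \<in> Zar A \<Longrightarrow> F \<subseteq> V \<Longrightarrow> y \<in> V"
  shows "y \<in> A_ultra A \<U> Y"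
proof -
  have "Bset A F \<inter> Y \<in> \<U>" using Bset_Int_mem_ultrafilter[OF Y u assms(3,4)] .
  moreover have "Bset A F \<inter> Y \<subseteq> Bset A {y} \<inter> Y" using forces unfolding Bset_def by blast
  ultimately show ?thesis
    unfolding A_ultra_def by (blast intro: filter_on_mono[OF ultrafilter_on_filter_on[OF u]])
qed

lemma A_ultra_valuation:
  assumes Y: "Y \<subseteq> Zar A" and u: "ultrafilter_on Y \<U>" and "x \<noteq> 0"
  shows "x \<in> A_ultra A \<U> Y \<or> inverse x \<in> A_ultra A \<U> Y"
proof -
  have "inverse x \<in> A_ultra A \<U> Y" if "x \<notin> A_ultra A \<U> Y"
  proof -
    have "Y - Bset A {x} \<inter> Y \<in> \<U>"
      using that unfolding A_ultra_def by (blast intro: ultrafilter_on_Diff[OF u])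
    moreover have "Y - Bset A {x} \<inter> Y \<subseteq> Bset A {inverse x} \<inter> Y"
      using Y \<open>x \<noteq> 0\<close> unfolding Bset_def Zar_def valuation_ring_def by blast
    ultimately show ?thesis
      unfolding A_ultra_def by (blast intro: filter_on_mono[OF ultrafilter_on_filter_on[OF u]])
  qed
  then show ?thesis by blast
qed

lemma A_ultra_in_Zar:
  assumes Y: "Y \<subseteq> Zar A" and u: "ultrafilter_on Y \<U>"
  shows "A_ultra A \<U> Y \<in> Zar A"
proof -
  let ?V = "A_ultra A \<U> Y"
  have closed: "y \<in> ?V" if "finite F" "F \<subseteq> ?V" "\<And>V. V \<in> Zar A \<Longrightarrow> F \<subseteq> V \<Longrightarrow> y \<in> V" for F y
    using A_ultra_closed[OF Y u] that by blast
  have ring: "0 \<in> V" "1 \<in> V" "A \<subseteq> V"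
    "\<forall>x\<in>V. \<forall>y\<in>V. x + y \<in> V \<and> x * y \<in> V \<and> - x \<in> V" if "V \<in> Zar A" for V
    using that unfolding Zar_def valuation_ring_def is_subring_def by simp_all
  show ?thesis
    unfolding Zar_def valuation_ring_def is_subring_def
  proof (intro CollectI conjI ballI allI impI subsetI)
    show "0 \<in> ?V" "1 \<in> ?V" by (rule closed[of "{}"]; use ring in simp)+
    show "a \<in> ?V" if "a \<in> A" for a
      by (rule closed[of "{}"]) (use ring that in auto)
    show "x + y \<in> ?V" "x * y \<in> ?V" if "x \<in> ?V" "y \<in> ?V" for x y
      by (rule closed[of "{x, y}"]; use ring that in simp)+
    show "- x \<in> ?V" if "x \<in> ?V" for x
      by (rule closed[of "{x}"]) (use ring that in simp_all)
    show "x \<in> ?V \<or> inverse x \<in> ?V" if "x \<noteq> 0" for x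
      by (rule A_ultra_valuation[OF Y u that])
  qed
qed

section \<open>The ultrafilter topology and the #-topology\<close>

lemma ultrafilter_converges_sharp_top:
  assumes Y: "Y \<subseteq> Zar A" and u: "ultrafilter_on Y \<U>"
    and "openin (sharp_top A) W" and "A_ultra A \<U> Y \<in> W"
  shows "W \<inter> Y \<in> \<U>"
  using ultrafilter_on_filter_on[OF u] _ assms(3)[unfolded sharp_top_def] assms(4)
proof (rule filter_on_neighbourhood_generated_by)
  fix s assume "s \<in> {Bset A F |F. finite F} \<union> {Zar A - Bset A F |F. finite F}"
    and "A_ultra A \<U> Y \<in> s"
  then consider F where "finite F" "s = Bset A F" "F \<subseteq> A_ultra A \<U> Y"
    | F where "s = Zar A - Bset A F" "\<not> F \<subseteq> A_ultra A \<U> Y"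
    using A_ultra_in_Zar[OF Y u] unfolding Bset_def by blast
  then show "s \<inter> Y \<in> \<U>"
    by cases (simp_all add: Bset_Int_mem_ultrafilter[OF Y u] Diff_Bset_Int_mem_ultrafilter[OF Y u])
qed

lemma topspace_sharp_top: "topspace (sharp_top A) = Zar A"
proof -
  have "Bset A {} \<in> {Bset A F |F. finite F}" by blast
  then show ?thesis
    unfolding sharp_top_def topology_generated_by_topspace Bset_empty using Bset_subset_Zar by blast
qed

lemma openin_sharp_top_Bset: "finite F \<Longrightarrow> openin (sharp_top A) (Bset A F)"
  unfolding sharp_top_def by (rule topology_generated_by_Basis) blast

lemma openin_sharp_top_Diff_Bset: "finite F \<Longrightarrow> openin (sharp_top A) (Zar A - Bset A F)"
  unfolding sharp_top_def by (rule topology_generated_by_Basis) blast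

lemma compactin_sharp_top_if_stable:
  assumes "stable_ultra A Y"
  shows "compactin (sharp_top A) Y"
proof (rule compactin_if_ultrafilters_converge)
  have Y: "Y \<subseteq> Zar A" using assms unfolding stable_ultra_def by blast
  then show "Y \<subseteq> topspace (sharp_top A)" by (simp add: topspace_sharp_top)
  fix \<U> assume u: "ultrafilter_on Y \<U>"
  then have "A_ultra A \<U> Y \<in> Y" using assms unfolding stable_ultra_def by blast
  with ultrafilter_converges_sharp_top[OF Y u]
  show "\<exists>y\<in>Y. \<forall>W. openin (sharp_top A) W \<and> y \<in> W \<longrightarrow> W \<inter> Y \<in> \<U>" by blast
qed

lemma Hausdorff_space_sharp_top: "Hausdorff_space (sharp_top A)"
  unfolding Hausdorff_space_def topspace_sharp_top
proof (intro allI impI)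
  fix V W assume VW: "V \<in> Zar A \<and> W \<in> Zar A \<and> V \<noteq> W"
  have separate: "\<exists>U U'. openin (sharp_top A) U \<and> openin (sharp_top A) U' \<and> V \<in> U \<and> W \<in> U' \<and> disjnt U U'"
    if "V \<in> Zar A" "W \<in> Zar A" "x \<in> V" "x \<notin> W" for V W x
    using that openin_sharp_top_Bset[of "{x}" A] openin_sharp_top_Diff_Bset[of "{x}" A]
    unfolding Bset_def disjnt_def by blast
  show "\<exists>U U'. openin (sharp_top A) U \<and> openin (sharp_top A) U' \<and> V \<in> U \<and> W \<in> U' \<and> disjnt U U'"
  proof (cases "V \<subseteq> W")
    case True
    then obtain x where "x \<in> W" "x \<notin> V" using VW by blast
    then show ?thesis using separate[of W V x] VW by (meson disjnt_sym)
  next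
    case False
    then obtain x where "x \<in> V" "x \<notin> W" by blast
    then show ?thesis using separate[of V W x] VW by blast
  qed
qed

lemma closedin_sharp_top_if_stable: "stable_ultra A Y \<Longrightarrow> closedin (sharp_top A) Y"
  by (rule compactin_imp_closedin[OF Hausdorff_space_sharp_top compactin_sharp_top_if_stable])

lemma stable_ultra_Bset: "stable_ultra A (Bset A S)"
  unfolding stable_ultra_def
proof (intro conjI allI impI Bset_subset_Zar)
  fix \<U> assume u: "ultrafilter_on (Bset A S) \<U>"
  have "S \<subseteq> A_ultra A \<U> (Bset A S)"
  proof
    fix s assume "s \<in> S"
    then have "Bset A {s} \<inter> Bset A S = Bset A S" unfolding Bset_def by blast
    then show "s \<in> A_ultra A \<U> (Bset A S)"
      unfolding A_ultra_def using filter_on_top[OF ultrafilter_on_filter_on[OF u]] by simp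
  qed
  then show "A_ultra A \<U> (Bset A S) \<in> Bset A S"
    using A_ultra_in_Zar[OF Bset_subset_Zar u] unfolding Bset_def by blast
qed

lemma stable_ultra_Diff_Bset:
  assumes "finite F"
  shows "stable_ultra A (Zar A - Bset A F)"
  unfolding stable_ultra_def
proof (intro conjI allI impI Diff_subset)
  fix \<U> assume u: "ultrafilter_on (Zar A - Bset A F) \<U>"
  have Y: "Zar A - Bset A F \<subseteq> Zar A" by blast
  show "A_ultra A \<U> (Zar A - Bset A F) \<in> Zar A - Bset A F"
  proof (rule ccontr)
    assume "A_ultra A \<U> (Zar A - Bset A F) \<notin> Zar A - Bset A F"
    then have "F \<subseteq> A_ultra A \<U> (Zar A - Bset A F)"
      using A_ultra_in_Zar[OF Y u] unfolding Bset_def by blast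
    then have "Bset A F \<inter> (Zar A - Bset A F) \<in> \<U>"
      by (rule Bset_Int_mem_ultrafilter[OF Y u assms])
    then show False using filter_on_empty[OF ultrafilter_on_filter_on[OF u]] by simp
  qed
qed

lemma closedin_sharp_top_Bset: "closedin (sharp_top A) (Bset A S)"
  by (rule closedin_sharp_top_if_stable[OF stable_ultra_Bset])

lemma compact_space_sharp_top: "compact_space (sharp_top A)"
  unfolding compact_space_def topspace_sharp_top
  using compactin_sharp_top_if_stable[OF stable_ultra_Bset[of A "{}"]] by (simp add: Bset_empty)

lemma openin_sharp_top_Diff_closedin: "closedin (sharp_top A) C \<Longrightarrow> openin (sharp_top A) (Zar A - C)"
  unfolding closedin_def topspace_sharp_top by blast

lemma ultra_top_eq_sharp_top: "ultra_top A = sharp_top A"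
proof (rule topology_generated_by_eqI[OF ultra_top_def sharp_top_def])
  fix s assume "s \<in> {Zar A - Y |Y. stable_ultra A Y}"
  then obtain Y where "s = Zar A - Y" "stable_ultra A Y" by blast
  then show "openin (sharp_top A) s"
    by (simp add: openin_sharp_top_Diff_closedin closedin_sharp_top_if_stable)
next
  fix s assume "s \<in> {Bset A F |F. finite F} \<union> {Zar A - Bset A F |F. finite F}"
  then consider F where "finite F" "s = Zar A - (Zar A - Bset A F)"
    | F where "s = Zar A - Bset A F"
    using Bset_subset_Zar by blast
  then show "openin (ultra_top A) s"
    unfolding ultra_top_def
    by cases (use stable_ultra_Diff_Bset stable_ultra_Bset in \<open>blast intro: topology_generated_by_Basis\<close>)+
qed

section \<open>Comparison with the Zariski and constructible topologies\<close>

lemma topspace_zariski_top: "topspace (zariski_top A) = Zar A"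
proof -
  have "Bset A {} \<in> {Bset A F |F. finite F}" by blast
  then show ?thesis
    unfolding zariski_top_def topology_generated_by_topspace Bset_empty using Bset_subset_Zar by blast
qed

lemma openin_zariski_top_Bset: "finite F \<Longrightarrow> openin (zariski_top A) (Bset A F)"
  unfolding zariski_top_def by (rule topology_generated_by_Basis) blast

lemma openin_sharp_top_if_zariski:
  assumes "openin (zariski_top A) W"
  shows "openin (sharp_top A) W"
proof (rule openin_topology_generated_by_coarsest)
  show "openin (topology_generated_by {Bset A F |F. finite F}) W"
    using assms unfolding zariski_top_def .
qed (auto intro: openin_sharp_top_Bset)

lemma compactin_zariski_top_Bset: "compactin (zariski_top A) (Bset A S)"
  using compactin_sharp_top_if_stable[OF stable_ultra_Bset]
  by (rule compactin_contractive) (simp_all add: topspace_sharp_top topspace_zariski_top openin_sharp_top_if_zariski)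

lemma zariski_open_covered_by_Bset:
  assumes "openin (zariski_top A) W" and "V \<in> W"
  shows "\<exists>F. finite F \<and> V \<in> Bset A F \<and> Bset A F \<subseteq> W"
proof -
  have "generate_topology_on {Bset A F |F. finite F} W"
    using assms(1) unfolding zariski_top_def openin_topology_generated_by_iff .
  then show ?thesis using \<open>V \<in> W\<close>
  proof (induction rule: generate_topology_on.induct)
    case Empty
    then show ?case by simp
  next
    case (Int a b)
    then obtain F G where "finite F" "V \<in> Bset A F" "Bset A F \<subseteq> a"
      and "finite G" "V \<in> Bset A G" "Bset A G \<subseteq> b"
      by blast
    then show ?case using Bset_Un[of A F G] by (intro exI[of _ "F \<union> G"]) auto
  next
    case (UN K)
    then obtain k F where "k \<in> K" "finite F" "V \<in> Bset A F" "Bset A F \<subseteq> k" by blast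
    then show ?case by blast
  next
    case (Basis s)
    then show ?case by blast
  qed
qed

lemma closedin_sharp_top_if_zariski_compact_open:
  assumes "openin (zariski_top A) U" and "compactin (zariski_top A) U"
  shows "closedin (sharp_top A) U"
proof -
  define \<B> where "\<B> = {Bset A F | F. finite F \<and> Bset A F \<subseteq> U}"
  have "U \<subseteq> \<Union>\<B>"
    using zariski_open_covered_by_Bset[OF assms(1)] unfolding \<B>_def by blast
  moreover have "\<forall>B\<in>\<B>. openin (zariski_top A) B"
    unfolding \<B>_def using openin_zariski_top_Bset by blast
  ultimately obtain \<F> where "finite \<F>" "\<F> \<subseteq> \<B>" "U \<subseteq> \<Union>\<F>"
    using assms(2) unfolding compactin_def by blast
  moreover have "\<Union>\<F> \<subseteq> U" using \<open>\<F> \<subseteq> \<B>\<close> unfolding \<B>_def by blast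
  ultimately have "U = \<Union>\<F>" by blast
  moreover have "closedin (sharp_top A) (\<Union>\<F>)"
    using \<open>finite \<F>\<close> \<open>\<F> \<subseteq> \<B>\<close> closedin_sharp_top_Bset unfolding \<B>_def
    by (intro closedin_Union) blast+
  ultimately show ?thesis by simp
qed

lemma sharp_top_eq_closed_and_compact_open:
  "sharp_top A = topology_generated_by
     ({Zar A - C | C. closedin (zariski_top A) C} \<union>
      {Zar A - U | U. openin (zariski_top A) U \<and> compactin (zariski_top A) U})"
  (is "_ = topology_generated_by ?\<T>")
proof (rule topology_generated_by_eqI[OF sharp_top_def refl])
  fix s assume "s \<in> {Bset A F |F. finite F} \<union> {Zar A - Bset A F |F. finite F}"
  then obtain F where "finite F" and s: "s = Bset A F \<or> s = Zar A - Bset A F" by blast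
  have "closedin (zariski_top A) (Zar A - Bset A F)"
    using openin_zariski_top_Bset[OF \<open>finite F\<close>]
    by (simp add: closedin_def topspace_zariski_top Diff_Diff_Int Int_absorb1 Bset_subset_Zar)
  moreover have "Bset A F = Zar A - (Zar A - Bset A F)"
    using Bset_subset_Zar by blast
  ultimately have "s \<in> ?\<T>"
    using s openin_zariski_top_Bset[OF \<open>finite F\<close>] compactin_zariski_top_Bset[of A F] by blast
  then show "openin (topology_generated_by ?\<T>) s" by (rule topology_generated_by_Basis)
next
  fix t assume "t \<in> ?\<T>"
  then consider C where "closedin (zariski_top A) C" "t = Zar A - C"
    | U where "openin (zariski_top A) U" "compactin (zariski_top A) U" "t = Zar A - U"
    by blast
  then show "openin (sharp_top A) t"
  proof cases
    case 1
    then have "openin (zariski_top A) t" by (simp add: closedin_def topspace_zariski_top)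
    then show ?thesis by (rule openin_sharp_top_if_zariski)
  next
    case 2
    then show ?thesis
      by (simp add: openin_sharp_top_Diff_closedin closedin_sharp_top_if_zariski_compact_open)
  qed
qed

lemma sharp_top_eq_Bset_closed_subbasis:
  "sharp_top A = topology_generated_by
     ((\<lambda>C. Zar A - C) `
       ({Bset A F | F. finite F} \<union>
        {Zar A \<inter> (\<Inter>G\<in>\<G>. Zar A - Bset A G) | \<G>. \<forall>G\<in>\<G>. finite G}))"
  (is "_ = topology_generated_by ((\<lambda>C. Zar A - C) ` ?\<C>)")
proof (rule topology_generated_by_eqI[OF sharp_top_def refl])
  fix s assume "s \<in> {Bset A F |F. finite F} \<union> {Zar A - Bset A F |F. finite F}"
  then obtain F where "finite F" and s: "s = Bset A F \<or> s = Zar A - Bset A F" by blast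
  have "Zar A \<inter> (\<Inter>G\<in>{F}. Zar A - Bset A G) \<in> ?\<C>" "Bset A F \<in> ?\<C>"
    using \<open>finite F\<close> by blast+
  moreover have "Bset A F = Zar A - (Zar A \<inter> (\<Inter>G\<in>{F}. Zar A - Bset A G))"
    using Bset_subset_Zar by blast
  ultimately have "s \<in> (\<lambda>C. Zar A - C) ` ?\<C>"
    using s by blast
  then show "openin (topology_generated_by ((\<lambda>C. Zar A - C) ` ?\<C>)) s"
    by (rule topology_generated_by_Basis)
next
  fix t assume "t \<in> (\<lambda>C. Zar A - C) ` ?\<C>"
  then obtain C where "C \<in> ?\<C>" and t: "t = Zar A - C" by blast
  from \<open>C \<in> ?\<C>\<close> consider F where "finite F" "C = Bset A F"
    | \<G> where "\<forall>G\<in>\<G>. finite G" "C = Zar A \<inter> (\<Inter>G\<in>\<G>. Zar A - Bset A G)"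
    by blast
  then show "openin (sharp_top A) t"
  proof cases
    case 1
    then show ?thesis using t by (simp add: openin_sharp_top_Diff_Bset)
  next
    case 2
    then have "t = (\<Union>G\<in>\<G>. Bset A G)" using t Bset_subset_Zar by blast
    then show ?thesis using 2(1) by (auto intro!: openin_Union openin_sharp_top_Bset)
  qed
qed

lemma sharp_top_eq_constructible_top: "sharp_top A = constructible_top (zariski_top A)"
proof (rule topology_generated_by_eqI[OF sharp_top_def constructible_top_def])
  fix s assume "s \<in> {Bset A F |F. finite F} \<union> {Zar A - Bset A F |F. finite F}"
  then obtain F where "finite F" and s: "s = Bset A F \<or> s = Zar A - Bset A F" by blast
  then have "s \<in> {U. openin (zariski_top A) U \<and> compactin (zariski_top A) U} \<union>
    {topspace (zariski_top A) - U |U. openin (zariski_top A) U \<and> compactin (zariski_top A) U}"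
    using openin_zariski_top_Bset[OF \<open>finite F\<close>] compactin_zariski_top_Bset[of A F]
    unfolding topspace_zariski_top by blast
  then show "openin (constructible_top (zariski_top A)) s"
    unfolding constructible_top_def by (rule topology_generated_by_Basis)
next
  fix t assume "t \<in> {U. openin (zariski_top A) U \<and> compactin (zariski_top A) U} \<union>
    {topspace (zariski_top A) - U |U. openin (zariski_top A) U \<and> compactin (zariski_top A) U}"
  then consider "openin (zariski_top A) t"
    | U where "openin (zariski_top A) U" "compactin (zariski_top A) U" "t = Zar A - U"
    unfolding topspace_zariski_top by blast
  then show "openin (sharp_top A) t"
  proof cases
    case 1
    then show ?thesis by (rule openin_sharp_top_if_zariski)
  next
    case 2
    then show ?thesis
      by (simp add: openin_sharp_top_Diff_closedin closedin_sharp_top_if_zariski_compact_open)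
  qed
qed

theorem theorem3p4:
  fixes A :: "'a::field set"
  assumes "is_subring A"
  shows
    "((\<forall>U. openin (zariski_top A) U \<longrightarrow> openin (ultra_top A) U) \<and>
     (\<forall>S. closedin (ultra_top A) (Bset A S)) \<and>
     (\<forall>F. finite F \<longrightarrow> openin (ultra_top A) (Bset A F) \<and> closedin (ultra_top A) (Bset A F)) \<and>
     (Hausdorff_space (sharp_top A)) \<and>
     (sharp_top A = topology_generated_by
           ({Zar A - C | C. closedin (zariski_top A) C} \<union>
            {Zar A - U | U. openin (zariski_top A) U \<and> compactin (zariski_top A) U})) \<and>
     (sharp_top A = topology_generated_by
           ((\<lambda>C. Zar A - C) `
             ({Bset A F | F. finite F} \<union>
              {Zar A \<inter> (\<Inter>G\<in>\<G>. Zar A - Bset A G) | \<G>. \<forall>G\<in>\<G>. finite G}))) \<and>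
     (Hausdorff_space (ultra_top A) \<and> compact_space (ultra_top A)) \<and>
     (ultra_top A = sharp_top A \<and> sharp_top A = constructible_top (zariski_top A)))"
  unfolding ultra_top_eq_sharp_top
proof (intro conjI allI impI)
  show "openin (sharp_top A) U" if "openin (zariski_top A) U" for U
    using that by (rule openin_sharp_top_if_zariski)
  show "openin (sharp_top A) (Bset A F)" if "finite F" for F
    using that by (rule openin_sharp_top_Bset)
qed (rule closedin_sharp_top_Bset Hausdorff_space_sharp_top compact_space_sharp_top
    sharp_top_eq_closed_and_compact_open sharp_top_eq_Bset_closed_subbasis
    sharp_top_eq_constructible_top refl)+

end
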